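(* (a) Let $v_1,\dots,v_n$ be i.i.d. $\mathcal N(0,I_d/d)$ in $\mathbb R^d$ with $n\ge c\,d^2/\log d$ for a fixed constant $c>0$. For any fixed $\epsilon>0$, with probability $1-e^{-\Omega(d)}$, $$\inf_{x\in S^{d-1}}\frac1n\sum_{i=1}^n|x^\top v_i|\ \ge\ \sqrt{\frac{2-\epsilon}{\pi d}}.$$ (b) If instead $v_1,\dots,v_n\in\mathbb R^d\setminus\{0\}$ are deterministic and satisfy $\|v_i\|\lesssim1$, $\frac1n\sum_iv_iv_i^\top\succeq\frac{c'}{d}I_d$ and $\sup_{\|x\|=1}\frac1n\sum_i\langle v_i,x\rangle^4\lesssim d^{-2}$ (fixed implicit constants), then deterministically $\inf_{x\in S^{d-1}}\frac1n\sum_i|x^\top v_i|\ge C/\sqrt d$ for a constant $C>0$ depending only on these implicit constants.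
   Context: $S^{d-1}$ is the unit sphere in $\mathbb R^d$. Part (a) holds for all sufficiently large $d$. *)

theory Defs
  imports "HOL-Probability.Probability"
begin

text \<open>Vectors in R^d are represented as functions nat => real, only the
coordinates j < d being relevant; a family v_1..v_n is v :: nat => nat => real
(v i j = j-th coordinate of the i-th vector, i < n, j < d).\<close>

definition sphere_d :: "nat \<Rightarrow> (nat \<Rightarrow> real) set" where
  "sphere_d d = {x. (\<Sum>j<d. (x j)\<^sup>2) = 1}"

definition inner_d :: "nat \<Rightarrow> (nat \<Rightarrow> real) \<Rightarrow> (nat \<Rightarrow> real) \<Rightarrow> real" where
  "inner_d d x y = (\<Sum>j<d. x j * y j)"

definition norm_d :: "nat \<Rightarrow> (nat \<Rightarrow> real) \<Rightarrow> real" where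
  "norm_d d x = sqrt (\<Sum>j<d. (x j)\<^sup>2)"

definition avg_abs_proj :: "nat \<Rightarrow> nat \<Rightarrow> (nat \<Rightarrow> nat \<Rightarrow> real) \<Rightarrow> (nat \<Rightarrow> real) \<Rightarrow> real" where
  "avg_abs_proj n d v x = (1 / real n) * (\<Sum>i<n. \<bar>inner_d d x (v i)\<bar>)"

definition loewner_ge :: "nat \<Rightarrow> (nat \<Rightarrow> nat \<Rightarrow> real) \<Rightarrow> (nat \<Rightarrow> nat \<Rightarrow> real) \<Rightarrow> bool" where
  "loewner_ge d M N \<longleftrightarrow> (\<forall>x. (\<Sum>i<d. \<Sum>j<d. x i * (M i j - N i j) * x j) \<ge> 0)"

text \<open>Joint law of n i.i.d. N(0, I_d/d) vectors in R^d: the (i,j) entry is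
the j-th coordinate of v_i, all entries i.i.d. N(0, 1/d) (standard deviation 1/sqrt d).\<close>
definition gauss_vectors :: "nat \<Rightarrow> nat \<Rightarrow> (nat \<times> nat \<Rightarrow> real) measure" where
  "gauss_vectors n d = PiM ({..<n} \<times> {..<d})
      (\<lambda>_. density lborel (normal_density 0 (1 / sqrt (real d))))"

end

theory Submission
  imports Defs
begin

text \<open>
  For a fixed direction \<open>y\<close> the projections \<open>\<langle>y, v\<^sub>i\<rangle>\<close> of a Gaussian design are i.i.d.
  \<open>N(0, |y|\<^sup>2/d)\<close>, whose absolute values have mean \<open>|y| sqrt (2/(\<pi> d))\<close>. A Chernoff bound,
  driven by \<open>exp (-t) \<le> 1 - t + t\<^sup>2/2\<close>, shows that their average falls \<open>\<eta> |y| / sqrt d\<close> below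
  this mean with probability at most \<open>exp (- n \<eta>\<^sup>2 / 2)\<close>. The average is homogeneous in the
  direction and Lipschitz for the sup-norm, with constant the mean \<open>l\<^sub>1\<close>-norm of the \<open>v\<^sub>i\<close>,
  which is \<open>O(sqrt d)\<close> except with probability \<open>exp (- n d)\<close>; so it suffices to control it on a grid of
  mesh \<open>\<eta> / (2 d)\<close>. The grid has \<open>exp (O (d log d))\<close> points, and the union bound over it
  costs nothing once \<open>n \<eta>\<^sup>2\<close> is large compared with \<open>d log d\<close>, as it is for
  \<open>n \<ge> c d\<^sup>2 / log d\<close>.

  Part (b) is deterministic: Hoelder's inequality
  \<open>(\<Sum> X\<^sub>i\<^sup>2)\<^sup>3 \<le> (\<Sum> |X\<^sub>i|)\<^sup>2 (\<Sum> X\<^sub>i\<^sup>4)\<close> turns the lower bound on the second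
  moment and the upper bound on the fourth moment of \<open>X\<^sub>i = \<langle>x, v\<^sub>i\<rangle>\<close> into a lower bound
  on the first absolute moment.
\<close>

section \<open>Laplace transforms of the normal density\<close>

lemma exp_neg_le_quadratic:
  fixes t :: real
  assumes "t \<ge> 0"
  shows "exp (- t) \<le> 1 - t + t\<^sup>2 / 2"
proof -
  have pos: "0 \<le> 1 - t + t\<^sup>2 / 2"
    using sum_power2_ge_zero[of "t - 1" 1] by (simp add: power2_diff field_simps)
  have "1 \<le> 1 + t ^ 4 / 4" by simp
  also have "\<dots> = (1 - t + t\<^sup>2 / 2) * (1 + t + t\<^sup>2 / 2)"
    by (simp add: algebra_simps power2_eq_square power4_eq_xxxx)
  also have "\<dots> \<le> (1 - t + t\<^sup>2 / 2) * exp t"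
    by (intro mult_left_mono exp_lower_Taylor_quadratic assms pos)
  finally show ?thesis by (simp add: exp_minus field_simps)
qed

lemma normal_density_mult_exp:
  assumes "s > 0"
  shows "normal_density 0 s x * exp (b * x) = exp (b\<^sup>2 * s\<^sup>2 / 2) * normal_density (b * s\<^sup>2) s x"
proof -
  have "- x\<^sup>2 / (2 * s\<^sup>2) + b * x = b\<^sup>2 * s\<^sup>2 / 2 + - (x - b * s\<^sup>2)\<^sup>2 / (2 * s\<^sup>2)"
    using assms by (simp add: field_simps power2_eq_square)
  then show ?thesis
    unfolding normal_density_def by (simp add: mult_ac flip: exp_add)
qed

lemma nn_integral_normal_exp_neg_abs_le:
  assumes s: "s > 0" and l: "l \<ge> 0"
  shows "(\<integral>\<^sup>+x. normal_density 0 s x * exp (- l * \<bar>x\<bar>) \<partial>lborel)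
           \<le> exp (- l * s * sqrt (2 / pi) + (l * s)\<^sup>2 / 2)"
proof -
  define g where "g x = normal_density 0 s x * (1 - l * \<bar>x\<bar> + (l * \<bar>x\<bar>)\<^sup>2 / 2)" for x
  have int_abs: "integrable lborel (\<lambda>x. normal_density 0 s x * \<bar>x - 0\<bar> ^ 1)"
    and int_sq: "integrable lborel (\<lambda>x. normal_density 0 s x * (x - 0) ^ 2)"
    using integrable_normal_moment_abs[OF s] integrable_normal_moment[OF s] by blast+
  have g_split: "g = (\<lambda>x. normal_density 0 s x - l * (normal_density 0 s x * \<bar>x - 0\<bar> ^ 1)
      + (l\<^sup>2 / 2) * (normal_density 0 s x * (x - 0) ^ 2))"
    by (simp add: g_def fun_eq_iff algebra_simps power2_eq_square)
  have int_g: "integrable lborel g"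
    unfolding g_split using s int_abs int_sq by simp
  have "integral\<^sup>L lborel g = 1 - l * (s * sqrt (2 / pi)) + l\<^sup>2 / 2 * s\<^sup>2"
    using integral_normal_moment_abs_odd[OF s, of 0 0] integral_normal_moment_even[OF s, of 0 1]
    unfolding g_split using s int_abs int_sq by (simp add: power2_eq_square)
  also have "\<dots> \<le> exp (- l * s * sqrt (2 / pi) + (l * s)\<^sup>2 / 2)"
    using exp_ge_add_one_self[of "- l * s * sqrt (2 / pi) + (l * s)\<^sup>2 / 2"]
    by (simp add: power_mult_distrib algebra_simps)
  finally have int_g_le: "integral\<^sup>L lborel g \<le> exp (- l * s * sqrt (2 / pi) + (l * s)\<^sup>2 / 2)" .
  have taylor: "exp (- l * \<bar>x\<bar>) \<le> 1 - l * \<bar>x\<bar> + (l * \<bar>x\<bar>)\<^sup>2 / 2" for x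
    using exp_neg_le_quadratic[of "l * \<bar>x\<bar>"] l by simp
  have "(\<integral>\<^sup>+x. normal_density 0 s x * exp (- l * \<bar>x\<bar>) \<partial>lborel) \<le> (\<integral>\<^sup>+x. g x \<partial>lborel)"
    unfolding g_def by (intro nn_integral_mono ennreal_leI mult_left_mono taylor) simp
  also have "\<dots> = integral\<^sup>L lborel g"
  proof (intro nn_integral_eq_integral int_g AE_I2)
    show "0 \<le> g x" for x
      unfolding g_def using order_trans[OF exp_ge_zero taylor[of x]] by simp
  qed
  finally show ?thesis using int_g_le by (simp add: ennreal_leI order_trans)
qed

lemma nn_integral_normal_exp_abs_le:
  assumes s: "s > 0"
  shows "(\<integral>\<^sup>+x. normal_density 0 s x * exp (l * \<bar>x\<bar>) \<partial>lborel) \<le> 2 * exp ((l * s)\<^sup>2 / 2)"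
proof -
  have shift: "normal_density 0 s x * exp (b * x) = exp ((b * s)\<^sup>2 / 2) * normal_density (b * s\<^sup>2) s x"
    for b x using normal_density_mult_exp[OF s] by (simp add: power_mult_distrib)
  have "(\<integral>\<^sup>+x. normal_density 0 s x * exp (l * \<bar>x\<bar>) \<partial>lborel)
      \<le> (\<integral>\<^sup>+x. ennreal (normal_density 0 s x * exp (l * x))
          + normal_density 0 s x * exp (- l * x) \<partial>lborel)"
    by (intro nn_integral_mono) (auto simp: abs_if distrib_left[symmetric] simp flip: ennreal_plus
        intro!: ennreal_leI mult_left_mono)
  also have "\<dots> = ennreal (exp ((l * s)\<^sup>2 / 2)) * (\<integral>\<^sup>+x. normal_density (l * s\<^sup>2) s x \<partial>lborel)
      + ennreal (exp ((l * s)\<^sup>2 / 2)) * (\<integral>\<^sup>+x. normal_density (- l * s\<^sup>2) s x \<partial>lborel)"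
    unfolding shift using s
    by (simp add: nn_integral_add nn_integral_cmult ennreal_mult power_mult_distrib)
  also have "\<dots> = 2 * exp ((l * s)\<^sup>2 / 2)"
    using s by (simp add: nn_integral_eq_integral ennreal_mult' flip: mult_2)
  finally show ?thesis .
qed

section \<open>Chernoff bounds for sums of absolute values of independent normals\<close>

lemma (in prob_space) nn_integral_exp_sum_indep_le:
  fixes B :: real
  assumes I: "finite I" and indep: "indep_vars (\<lambda>_. borel) X I"
    and f: "f \<in> borel_measurable borel" and B: "B \<ge> 0"
    and bound: "\<And>i. i \<in> I \<Longrightarrow> (\<integral>\<^sup>+\<omega>. exp (f (X i \<omega>)) \<partial>M) \<le> B"
  shows "(\<integral>\<^sup>+\<omega>. exp (\<Sum>i\<in>I. f (X i \<omega>)) \<partial>M) \<le> B ^ card I"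
proof -
  have "(\<integral>\<^sup>+\<omega>. exp (\<Sum>i\<in>I. f (X i \<omega>)) \<partial>M) = (\<integral>\<^sup>+\<omega>. (\<Prod>i\<in>I. ennreal (exp (f (X i \<omega>)))) \<partial>M)"
    using I by (simp add: exp_sum prod_ennreal)
  also have "\<dots> = (\<Prod>i\<in>I. \<integral>\<^sup>+\<omega>. exp (f (X i \<omega>)) \<partial>M)"
    using indep_vars_compose2[OF indep, of "\<lambda>_ x. ennreal (exp (f x))"] f
    by (intro indep_vars_nn_integral I) auto
  also have "\<dots> \<le> (\<Prod>i\<in>I. ennreal B)"
    by (intro prod_mono_ennreal bound)
  finally show ?thesis using B by (simp add: prod_ennreal ennreal_power)
qed

lemma (in prob_space) distributed_weighted_sum_indep_normal:
  assumes J: "finite J" and indep: "indep_vars (\<lambda>_. borel) X J"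
    and normal: "\<And>j. j \<in> J \<Longrightarrow> distributed M lborel (X j) (normal_density 0 \<sigma>)"
    and \<sigma>: "\<sigma> > 0" and y: "L2_set y J > 0"
  shows "distributed M lborel (\<lambda>\<omega>. \<Sum>j\<in>J. y j * X j \<omega>) (normal_density 0 (\<sigma> * L2_set y J))"
proof -
  define J' where "J' = {j \<in> J. y j \<noteq> 0}"
  have "J' \<noteq> {}"
    using y L2_set_0'[of J y] by (auto simp: J'_def)
  moreover have "finite J'" using J by (simp add: J'_def)
  moreover have "indep_vars (\<lambda>_. borel) (\<lambda>j \<omega>. y j * X j \<omega>) J'"
    using indep_vars_compose2[OF indep_vars_subset[OF indep], of J' "\<lambda>j x. y j * x"]
    by (auto simp: J'_def)
  moreover have "distributed M lborel (\<lambda>\<omega>. y j * X j \<omega>) (normal_density 0 (\<bar>y j\<bar> * \<sigma>))"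
    if "j \<in> J'" for j
    using normal_density_affine[OF normal, where \<alpha> = "y j" and \<beta> = 0] \<sigma> that by (simp add: J'_def)
  ultimately have "distributed M lborel (\<lambda>\<omega>. \<Sum>j\<in>J'. y j * X j \<omega>)
      (normal_density (\<Sum>j\<in>J'. 0) (sqrt (\<Sum>j\<in>J'. (\<bar>y j\<bar> * \<sigma>)\<^sup>2)))"
    using \<sigma> by (intro sum_indep_normal) (auto simp: J'_def)
  moreover have "(\<Sum>j\<in>J'. y j * X j \<omega>) = (\<Sum>j\<in>J. y j * X j \<omega>)" for \<omega>
    by (rule sum.mono_neutral_left) (auto simp: J J'_def)
  moreover have "sqrt (\<Sum>j\<in>J'. (\<bar>y j\<bar> * \<sigma>)\<^sup>2) = \<sigma> * L2_set y J"
  proof -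
    have "(\<Sum>j\<in>J'. (\<bar>y j\<bar> * \<sigma>)\<^sup>2) = (\<Sum>j\<in>J. (y j)\<^sup>2) * \<sigma>\<^sup>2"
      by (subst sum.mono_neutral_left[of J J', symmetric])
        (auto simp: J J'_def power_mult_distrib sum_distrib_right)
    then show ?thesis using \<sigma> by (simp add: L2_set_def real_sqrt_mult)
  qed
  ultimately show ?thesis by simp
qed

lemma (in prob_space) sum_abs_normal_lower_tail:
  fixes X :: "'i \<Rightarrow> 'a \<Rightarrow> real" and s :: real
  assumes I: "finite I" and indep: "indep_vars (\<lambda>_. borel) X I"
    and normal: "\<And>i. i \<in> I \<Longrightarrow> distributed M lborel (X i) (normal_density 0 s)"
    and s: "s > 0" and a: "a < sqrt (2 / pi)"
  shows "prob {\<omega> \<in> space M. (\<Sum>i\<in>I. \<bar>X i \<omega>\<bar>) \<le> real (card I) * a * s}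
           \<le> exp (- real (card I) * (sqrt (2 / pi) - a)\<^sup>2 / 2)"
proof -
  define m where "m = sqrt (2 / pi)"
  define l where "l = (m - a) / s" \<comment> \<open>minimises the resulting Chernoff exponent\<close>
  have l: "l > 0" and ls: "l * s = m - a"
    using s a by (simp_all add: l_def m_def)
  have X_meas: "X i \<in> borel_measurable M" if "i \<in> I" for i
    using distributed_measurable[OF normal[OF that]] by simp
  have "emeasure M {\<omega> \<in> space M. (\<Sum>i\<in>I. \<bar>X i \<omega>\<bar>) \<le> real (card I) * a * s}
      \<le> exp (l * (real (card I) * a * s))
          * (\<integral>\<^sup>+\<omega>. ennreal (exp (- l * (\<Sum>i\<in>I. \<bar>X i \<omega>\<bar>))) * indicator (space M) \<omega> \<partial>M)"
    using X_meas by (intro Chernoff_ineq_nn_integral_le l sets.top) auto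
  also have "(\<integral>\<^sup>+\<omega>. ennreal (exp (- l * (\<Sum>i\<in>I. \<bar>X i \<omega>\<bar>))) * indicator (space M) \<omega> \<partial>M)
      = (\<integral>\<^sup>+\<omega>. exp (\<Sum>i\<in>I. - l * \<bar>X i \<omega>\<bar>) \<partial>M)"
    by (intro nn_integral_cong) (simp add: sum_distrib_left)
  also have "\<dots> \<le> ennreal (exp (- l * s * m + (l * s)\<^sup>2 / 2) ^ card I)"
  proof (rule nn_integral_exp_sum_indep_le[OF I indep, where f = "\<lambda>x. - l * \<bar>x\<bar>"])
    fix i assume "i \<in> I"
    have "(\<integral>\<^sup>+\<omega>. exp (- l * \<bar>X i \<omega>\<bar>) \<partial>M) = (\<integral>\<^sup>+x. normal_density 0 s x * exp (- l * \<bar>x\<bar>) \<partial>lborel)"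
      by (simp add: distributed_nn_integral[OF normal[OF \<open>i \<in> I\<close>]] ennreal_mult')
    also have "\<dots> \<le> exp (- l * s * m + (l * s)\<^sup>2 / 2)"
      unfolding m_def using s l by (intro nn_integral_normal_exp_neg_abs_le) auto
    finally show "(\<integral>\<^sup>+\<omega>. exp (- l * \<bar>X i \<omega>\<bar>) \<partial>M) \<le> exp (- l * s * m + (l * s)\<^sup>2 / 2)" .
  qed auto
  also have "ennreal (exp (l * (real (card I) * a * s))) * exp (- l * s * m + (l * s)\<^sup>2 / 2) ^ card I
      = exp (- real (card I) * (m - a)\<^sup>2 / 2)"
  proof -
    have "l * (real (card I) * a * s) + real (card I) * (- l * s * m + (l * s)\<^sup>2 / 2)
        = real (card I) * ((l * s) * a - (l * s) * m + (l * s)\<^sup>2 / 2)"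
      by (simp add: algebra_simps)
    also have "\<dots> = - real (card I) * (m - a)\<^sup>2 / 2"
      unfolding ls by (simp add: power2_eq_square field_simps)
    finally show ?thesis
      by (subst ennreal_mult'[symmetric]) (simp_all flip: exp_of_nat_mult exp_add)
  qed
  finally show ?thesis
    unfolding m_def emeasure_eq_measure by (simp add: mult_left_mono)
qed

lemma (in prob_space) sum_abs_normal_upper_tail:
  fixes X :: "'i \<Rightarrow> 'a \<Rightarrow> real" and s :: real
  assumes I: "finite I" and indep: "indep_vars (\<lambda>_. borel) X I"
    and normal: "\<And>i. i \<in> I \<Longrightarrow> distributed M lborel (X i) (normal_density 0 s)"
    and s: "s > 0"
  shows "prob {\<omega> \<in> space M. 3 * real (card I) * s \<le> (\<Sum>i\<in>I. \<bar>X i \<omega>\<bar>)} \<le> exp (- real (card I))"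
proof -
  have X_meas: "X i \<in> borel_measurable M" if "i \<in> I" for i
    using distributed_measurable[OF normal[OF that]] by simp
  have "emeasure M {\<omega> \<in> space M. 3 * real (card I) * s \<le> (\<Sum>i\<in>I. \<bar>X i \<omega>\<bar>)}
      \<le> exp (- (1 / s) * (3 * real (card I) * s))
          * (\<integral>\<^sup>+\<omega>. ennreal (exp (1 / s * (\<Sum>i\<in>I. \<bar>X i \<omega>\<bar>))) * indicator (space M) \<omega> \<partial>M)"
    using X_meas s by (intro Chernoff_ineq_nn_integral_ge sets.top) auto
  also have "(\<integral>\<^sup>+\<omega>. ennreal (exp (1 / s * (\<Sum>i\<in>I. \<bar>X i \<omega>\<bar>))) * indicator (space M) \<omega> \<partial>M)
      = (\<integral>\<^sup>+\<omega>. exp (\<Sum>i\<in>I. 1 / s * \<bar>X i \<omega>\<bar>) \<partial>M)"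
    by (intro nn_integral_cong) (simp add: sum_distrib_left)
  also have "\<dots> \<le> ennreal (exp 2 ^ card I)"
  proof (rule nn_integral_exp_sum_indep_le[OF I indep, where f = "\<lambda>x. 1 / s * \<bar>x\<bar>"])
    fix i assume "i \<in> I"
    have "(\<integral>\<^sup>+\<omega>. exp (1 / s * \<bar>X i \<omega>\<bar>) \<partial>M) = (\<integral>\<^sup>+x. normal_density 0 s x * exp (1 / s * \<bar>x\<bar>) \<partial>lborel)"
      by (simp add: distributed_nn_integral[OF normal[OF \<open>i \<in> I\<close>]] ennreal_mult')
    also have "\<dots> \<le> ennreal (2 * exp (1 / 2))"
      using nn_integral_normal_exp_abs_le[OF s, of "1 / s"] s by (simp add: power2_eq_square)
    also have "\<dots> \<le> ennreal (exp (3 / 2) * exp (1 / 2))"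
      using exp_ge_add_one_self[of "3 / 2"] by (intro ennreal_leI mult_right_mono) auto
    finally show "(\<integral>\<^sup>+\<omega>. exp (1 / s * \<bar>X i \<omega>\<bar>) \<partial>M) \<le> exp 2"
      by (simp flip: exp_add)
  qed auto
  also have "ennreal (exp (- (1 / s) * (3 * real (card I) * s))) * ennreal (exp 2 ^ card I)
      = exp (- real (card I))"
    using s by (subst ennreal_mult'[symmetric]) (simp_all flip: exp_of_nat_mult exp_add)
  finally show ?thesis
    unfolding emeasure_eq_measure by (simp add: mult_left_mono)
qed

section \<open>The Gaussian design\<close>

lemma indep_vars_PiM_components:
  assumes M: "\<And>i. i \<in> I \<Longrightarrow> prob_space (M i)"
  shows "prob_space.indep_vars (PiM I M) M (\<lambda>i \<omega>. \<omega> i) I"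
proof -
  interpret prob_space "PiM I M" by (rule prob_space_PiM[OF M])
  show ?thesis
  proof (cases "I = {}")
    case True
    then show ?thesis unfolding indep_vars_def indep_sets_def by simp
  next
    case False
    have "distr (PiM I M) (PiM I M) (\<lambda>\<omega>. \<lambda>i\<in>I. \<omega> i) = distr (PiM I M) (PiM I M) (\<lambda>\<omega>. \<omega>)"
      by (intro distr_cong) (auto simp: space_PiM PiE_def extensional_restrict)
    also have "\<dots> = PiM I M"
      by (simp add: distr_id2)
    also have "\<dots> = PiM I (\<lambda>i. distr (PiM I M) (M i) (\<lambda>\<omega>. \<omega> i))"
      by (intro PiM_cong refl) (rule distr_PiM_component[OF M, symmetric])
    finally show ?thesis
      using False by (subst indep_vars_iff_distr_eq_PiM') auto
  qed
qed

lemma prob_space_gauss_vectors: "prob_space (gauss_vectors n d)"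
  unfolding gauss_vectors_def by (intro prob_space_PiM prob_space_normal_density) auto

lemma gauss_vectors_entry_measurable [measurable]:
  "(\<lambda>\<omega>. \<omega> k) \<in> borel_measurable (gauss_vectors n d)" if "k \<in> {..<n} \<times> {..<d}"
  using measurable_component_singleton[OF that, of "\<lambda>_. density lborel (normal_density 0 (1 / sqrt d))"]
  by (simp add: gauss_vectors_def cong: measurable_cong_sets)

lemma gauss_vectors_entry_distributed:
  assumes "k \<in> {..<n} \<times> {..<d}"
  shows "distributed (gauss_vectors n d) lborel (\<lambda>\<omega>. \<omega> k) (normal_density 0 (1 / sqrt d))"
proof -
  let ?N = "density lborel (normal_density 0 (1 / sqrt d))"
  have "prob_space ?N" using assms by (intro prob_space_normal_density) auto
  have "distr (gauss_vectors n d) lborel (\<lambda>\<omega>. \<omega> k) = distr (gauss_vectors n d) ?N (\<lambda>\<omega>. \<omega> k)"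
    by (rule distr_cong) auto
  also have "\<dots> = ?N"
    unfolding gauss_vectors_def by (rule distr_PiM_component[OF \<open>prob_space ?N\<close> assms])
  finally show ?thesis
    using gauss_vectors_entry_measurable[OF assms] by (simp add: distributed_def)
qed

lemma indep_vars_gauss_vectors_entries:
  "prob_space.indep_vars (gauss_vectors n d) (\<lambda>_. borel) (\<lambda>k \<omega>. \<omega> k) ({..<n} \<times> {..<d})"
proof -
  interpret prob_space "gauss_vectors n d" by (rule prob_space_gauss_vectors)
  have "indep_vars (\<lambda>_. density lborel (normal_density 0 (1 / sqrt d))) (\<lambda>k \<omega>. \<omega> k) ({..<n} \<times> {..<d})"
    unfolding gauss_vectors_def by (intro indep_vars_PiM_components prob_space_normal_density) auto
  from indep_vars_compose2[OF this, of "\<lambda>_ x. x"] show ?thesis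
    by (simp add: measurable_ident_sets)
qed

lemma gauss_vectors_row_proj_distributed:
  assumes i: "i < n" and y: "L2_set y {..<d} > 0"
  shows "distributed (gauss_vectors n d) lborel (\<lambda>\<omega>. \<Sum>j<d. y j * \<omega> (i, j))
           (normal_density 0 (L2_set y {..<d} / sqrt d))"
proof -
  interpret prob_space "gauss_vectors n d" by (rule prob_space_gauss_vectors)
  have row: "{i} \<times> {..<d} = Pair i ` {..<d}" by auto
  have d: "d > 0" using y by (auto intro: ccontr)
  have "distributed (gauss_vectors n d) lborel (\<lambda>\<omega>. \<Sum>k\<in>{i} \<times> {..<d}. y (snd k) * \<omega> k)
      (normal_density 0 (1 / sqrt d * L2_set (\<lambda>k. y (snd k)) ({i} \<times> {..<d})))"
  proof (rule distributed_weighted_sum_indep_normal[where X = "\<lambda>k \<omega>. \<omega> k" and y = "\<lambda>k. y (snd k)"])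
    show "indep_vars (\<lambda>_. borel) (\<lambda>k \<omega>. \<omega> k) ({i} \<times> {..<d})"
      using i by (intro indep_vars_subset[OF indep_vars_gauss_vectors_entries]) auto
    show "distributed (gauss_vectors n d) lborel (\<lambda>\<omega>. \<omega> k) (normal_density 0 (1 / sqrt d))"
      if "k \<in> {i} \<times> {..<d}" for k
      using that i by (intro gauss_vectors_entry_distributed) auto
    show "0 < L2_set (\<lambda>k. y (snd k)) ({i} \<times> {..<d})"
      using y by (simp add: row L2_set_def sum.reindex inj_on_def)
  qed (use d in auto)
  moreover have "L2_set (\<lambda>k. y (snd k)) ({i} \<times> {..<d}) = L2_set y {..<d}"
    by (simp add: row L2_set_def sum.reindex inj_on_def)
  moreover have "(\<Sum>k\<in>{i} \<times> {..<d}. y (snd k) * \<omega> k) = (\<Sum>j<d. y j * \<omega> (i, j))" for \<omega>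
    by (simp add: row sum.reindex inj_on_def)
  ultimately show ?thesis by simp
qed

lemma indep_vars_gauss_vectors_row_projs:
  "prob_space.indep_vars (gauss_vectors n d) (\<lambda>_. borel) (\<lambda>i \<omega>. \<Sum>j<d. y j * \<omega> (i, j)) {..<n}"
proof -
  interpret prob_space "gauss_vectors n d" by (rule prob_space_gauss_vectors)
  define row where "row i = {i} \<times> {..<d}" for i :: nat
  have "indep_vars (\<lambda>i. PiM (row i) (\<lambda>_. borel)) (\<lambda>i \<omega>. restrict (\<lambda>k. \<omega> k) (row i)) {..<n}"
    by (rule indep_vars_restrict[OF indep_vars_gauss_vectors_entries])
      (auto simp: row_def disjoint_family_on_def)
  then have "indep_vars (\<lambda>_. borel) (\<lambda>i \<omega>. \<Sum>j<d. y j * restrict (\<lambda>k. \<omega> k) (row i) (i, j)) {..<n}"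
    by (rule indep_vars_compose2[where Y = "\<lambda>i f. \<Sum>j<d. y j * f (i, j)"]) (auto simp: row_def)
  then show ?thesis
    by (rule iffD1[OF indep_vars_cong, rotated 3]) (auto simp: row_def)
qed

lemma gauss_vectors_avg_abs_proj_lower_tail:
  assumes n: "n > 0" and y: "L2_set y {..<d} > 0" and a: "a < sqrt (2 / pi)"
  shows "measure (gauss_vectors n d)
      {\<omega> \<in> space (gauss_vectors n d). avg_abs_proj n d (\<lambda>i j. \<omega> (i, j)) y \<le> a * L2_set y {..<d} / sqrt d}
    \<le> exp (- real n * (sqrt (2 / pi) - a)\<^sup>2 / 2)"
proof -
  interpret prob_space "gauss_vectors n d" by (rule prob_space_gauss_vectors)
  have d: "d > 0" using y by (auto intro: ccontr)
  have "{\<omega> \<in> space (gauss_vectors n d). avg_abs_proj n d (\<lambda>i j. \<omega> (i, j)) y \<le> a * L2_set y {..<d} / sqrt d}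
      = {\<omega> \<in> space (gauss_vectors n d).
           (\<Sum>i\<in>{..<n}. \<bar>\<Sum>j<d. y j * \<omega> (i, j)\<bar>) \<le> real (card {..<n}) * a * (L2_set y {..<d} / sqrt d)}"
    using n by (auto simp: avg_abs_proj_def inner_d_def mult.commute field_simps)
  also have "prob \<dots> \<le> exp (- real (card {..<n}) * (sqrt (2 / pi) - a)\<^sup>2 / 2)"
    using d y a by (intro sum_abs_normal_lower_tail indep_vars_gauss_vectors_row_projs
        gauss_vectors_row_proj_distributed) auto
  finally show ?thesis by simp
qed

lemma gauss_vectors_entry_abs_sum_upper_tail:
  assumes d: "d > 0"
  shows "measure (gauss_vectors n d)
      {\<omega> \<in> space (gauss_vectors n d). 3 * real n * sqrt d \<le> (\<Sum>i<n. \<Sum>j<d. \<bar>\<omega> (i, j)\<bar>)}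
    \<le> exp (- (real n * real d))"
proof -
  interpret prob_space "gauss_vectors n d" by (rule prob_space_gauss_vectors)
  have bound: "3 * (real n * real d) / sqrt d = 3 * real n * sqrt d"
    using d by (simp add: field_simps)
  have entries: "(\<Sum>k\<in>{..<n} \<times> {..<d}. \<bar>\<omega> k\<bar>) = (\<Sum>i<n. \<Sum>j<d. \<bar>\<omega> (i, j)\<bar>)" for \<omega>
    by (simp add: sum.cartesian_product)
  show ?thesis
    using d sum_abs_normal_upper_tail[OF _ indep_vars_gauss_vectors_entries
        gauss_vectors_entry_distributed]
    by (simp add: card_cartesian_product bound entries)
qed

section \<open>Directional averages and nets on the sphere\<close>

lemma avg_abs_proj_nonneg: "avg_abs_proj n d v x \<ge> 0"
  unfolding avg_abs_proj_def by (simp add: sum_nonneg)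

lemma avg_abs_proj_scale: "avg_abs_proj n d v (\<lambda>j. t * x j) = \<bar>t\<bar> * avg_abs_proj n d v x"
  unfolding avg_abs_proj_def inner_d_def
  by (simp add: mult.assoc abs_mult sum_distrib_left[symmetric])

lemma avg_abs_proj_perturb:
  assumes close: "\<forall>j<d. \<bar>x j - y j\<bar> \<le> e"
  shows "avg_abs_proj n d v y - e * (\<Sum>i<n. \<Sum>j<d. \<bar>v i j\<bar>) / n \<le> avg_abs_proj n d v x"
proof -
  have row: "\<bar>inner_d d y (v i)\<bar> - e * (\<Sum>j<d. \<bar>v i j\<bar>) \<le> \<bar>inner_d d x (v i)\<bar>" for i
  proof -
    have "\<bar>inner_d d y (v i) - inner_d d x (v i)\<bar> = \<bar>\<Sum>j<d. (y j - x j) * v i j\<bar>"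
      by (simp add: inner_d_def sum_subtractf left_diff_distrib)
    also have "\<dots> \<le> (\<Sum>j<d. e * \<bar>v i j\<bar>)"
      using close by (intro order_trans[OF sum_abs] sum_mono)
        (auto simp: abs_mult abs_minus_commute intro: mult_right_mono)
    finally show ?thesis by (simp add: sum_distrib_left)
  qed
  have "(\<Sum>i<n. \<bar>inner_d d y (v i)\<bar>) - e * (\<Sum>i<n. \<Sum>j<d. \<bar>v i j\<bar>) \<le> (\<Sum>i<n. \<bar>inner_d d x (v i)\<bar>)"
    using sum_mono[of "{..<n}", OF row] by (simp add: sum_subtractf sum_distrib_left)
  from divide_right_mono[OF this, of n] show ?thesis
    by (simp add: avg_abs_proj_def diff_divide_distrib)
qed

lemma sphere_d_coord_abs_le: "x \<in> sphere_d d \<Longrightarrow> j < d \<Longrightarrow> \<bar>x j\<bar> \<le> 1"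
  using member_le_sum[of j "{..<d}" "\<lambda>j. (x j)\<^sup>2"] by (simp add: sphere_d_def abs_square_le_1)

lemma L2_set_ge_near_sphere_d:
  assumes x: "x \<in> sphere_d d" and close: "\<forall>j<d. \<bar>x j - y j\<bar> \<le> e"
  shows "1 - d * e \<le> L2_set y {..<d}"
proof -
  have "1 = L2_set (\<lambda>j. y j + (x j - y j)) {..<d}"
    using x by (simp add: sphere_d_def L2_set_def)
  also have "\<dots> \<le> L2_set y {..<d} + L2_set (\<lambda>j. x j - y j) {..<d}"
    by (rule L2_set_triangle_ineq)
  also have "L2_set (\<lambda>j. x j - y j) {..<d} \<le> d * e"
    using close sum_mono[of "{..<d}" "\<lambda>j. \<bar>x j - y j\<bar>" "\<lambda>_. e"]
    by (intro order_trans[OF L2_set_le_sum_abs]) simp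
  finally show ?thesis by simp
qed

lemma unit_vector_in_sphere_d: "d > 0 \<Longrightarrow> (\<lambda>j. if j = 0 then 1 else 0) \<in> sphere_d d"
  by (simp add: sphere_d_def if_distrib[of "\<lambda>x. x\<^sup>2"] cong: if_cong)

lemma le_INF_avg_abs_proj_iff:
  assumes "d > 0"
  shows "t \<le> (INF x\<in>sphere_d d. avg_abs_proj n d v x) \<longleftrightarrow> (\<forall>x\<in>sphere_d d. t \<le> avg_abs_proj n d v x)"
  using unit_vector_in_sphere_d[OF assms] avg_abs_proj_nonneg
  by (intro le_cINF_iff bdd_belowI2[where m = 0]) auto

definition rat_vectors :: "nat \<Rightarrow> (nat \<Rightarrow> real) set" where
  "rat_vectors d = {q. (\<forall>j<d. q j \<in> \<rat>) \<and> (\<forall>j\<ge>d. q j = 0)}"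

lemma countable_rat_vectors: "countable (rat_vectors d)"
proof -
  have "rat_vectors d \<subseteq> (\<lambda>xs j. if j < d then xs ! j else 0) ` {xs \<in> lists \<rat>. length xs = d}"
  proof
    fix q assume q: "q \<in> rat_vectors d"
    then have "map q [0..<d] \<in> {xs \<in> lists \<rat>. length xs = d}"
      and "q = (\<lambda>j. if j < d then map q [0..<d] ! j else 0)"
      by (auto simp: rat_vectors_def)
    then show "q \<in> (\<lambda>xs j. if j < d then xs ! j else 0) ` {xs \<in> lists \<rat>. length xs = d}"
      by blast
  qed
  moreover have "countable {xs \<in> lists \<rat>. length xs = d}"
    by (rule countable_subset[OF _ countable_lists[OF countable_rat]]) auto
  ultimately show ?thesis by (blast intro: countable_subset)
qed

lemma rat_vectors_dense:
  assumes "e > 0"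
  obtains q where "q \<in> rat_vectors d" "\<forall>j<d. \<bar>x j - q j\<bar> \<le> e"
proof -
  have "\<forall>j. \<exists>r. r \<in> \<rat> \<and> x j < r \<and> r < x j + e"
    using Rats_dense_in_real assms by (metis less_add_same_cancel1)
  then obtain r where r: "\<And>j. r j \<in> \<rat> \<and> x j < r j \<and> r j < x j + e"
    by metis
  show ?thesis
  proof (rule that)
    show "(\<lambda>j. if j < d then r j else 0) \<in> rat_vectors d"
      using r by (simp add: rat_vectors_def)
    show "\<forall>j<d. \<bar>x j - (if j < d then r j else 0)\<bar> \<le> e"
    proof (intro allI impI)
      fix j show "\<bar>x j - (if j < d then r j else 0)\<bar> \<le> e" if "j < d"
        using r[of j] that by (simp add: abs_le_iff)
    qed
  qed
qed

text \<open>By homogeneity and continuity in the direction, a lower bound on the sphere is equivalent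
  to countably many conditions; this is what makes the event measurable.\<close>

lemma sphere_lower_bound_iff_rat_vectors:
  assumes c: "c \<ge> 0"
  shows "(\<forall>x\<in>sphere_d d. c \<le> avg_abs_proj n d v x)
     \<longleftrightarrow> (\<forall>q\<in>rat_vectors d. c * L2_set q {..<d} \<le> avg_abs_proj n d v q)"
proof (intro iffI ballI)
  fix q assume sphere: "\<forall>x\<in>sphere_d d. c \<le> avg_abs_proj n d v x"
  define L where "L = L2_set q {..<d}"
  show "c * L2_set q {..<d} \<le> avg_abs_proj n d v q"
  proof (cases "L = 0")
    case True
    then show ?thesis by (simp add: L_def avg_abs_proj_nonneg)
  next
    case False
    then have L: "L > 0" using L2_set_nonneg[of q "{..<d}"] unfolding L_def by linarith
    have "(\<lambda>j. (1 / L) * q j) \<in> sphere_d d"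
      using L by (simp add: sphere_d_def L_def L2_set_def power_divide sum_nonneg
          flip: sum_divide_distrib)
    then have "c \<le> avg_abs_proj n d v (\<lambda>j. (1 / L) * q j)"
      using sphere by blast
    also have "\<dots> = avg_abs_proj n d v q / L"
      using L by (subst avg_abs_proj_scale) simp
    finally show ?thesis using L by (simp add: L_def field_simps)
  qed
next
  fix x assume rat: "\<forall>q\<in>rat_vectors d. c * L2_set q {..<d} \<le> avg_abs_proj n d v q"
    and x: "x \<in> sphere_d d"
  define W where "W = (\<Sum>i<n. \<Sum>j<d. \<bar>v i j\<bar>) / n"
  have W: "W \<ge> 0" by (simp add: W_def sum_nonneg)
  show "c \<le> avg_abs_proj n d v x"
  proof (rule field_le_epsilon)
    fix \<epsilon> :: real assume \<epsilon>: "\<epsilon> > 0"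
    define e where "e = \<epsilon> / (c * d + W + 1)"
    have den: "c * d + W + 1 > 0"
      using c W by (intro add_nonneg_pos add_nonneg_nonneg mult_nonneg_nonneg) auto
    then have e: "e > 0" using \<epsilon> by (simp add: e_def)
    have "e * (c * d + W) \<le> e * (c * d + W + 1)" using e by simp
    also have "\<dots> = \<epsilon>" using den by (simp add: e_def)
    finally have e_eq: "e * (c * d + W) \<le> \<epsilon>" .
    obtain q where q: "q \<in> rat_vectors d" and close: "\<forall>j<d. \<bar>x j - q j\<bar> \<le> e"
      using rat_vectors_dense[OF e] by blast
    have "c * (1 - d * e) - e * W \<le> c * L2_set q {..<d} - e * W"
      using L2_set_ge_near_sphere_d[OF x close] c by (simp add: mult_left_mono)
    also have "\<dots> \<le> avg_abs_proj n d v x"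
      using rat[rule_format, OF q] avg_abs_proj_perturb[OF close, of n v] by (simp add: W_def)
    finally show "c \<le> avg_abs_proj n d v x + \<epsilon>"
      using e_eq by (simp add: algebra_simps)
  qed
qed

lemma sets_gauss_vectors_sphere_lower_bound:
  assumes "c \<ge> 0"
  shows "{\<omega> \<in> space (gauss_vectors n d). \<forall>x\<in>sphere_d d. c \<le> avg_abs_proj n d (\<lambda>i j. \<omega> (i, j)) x}
           \<in> sets (gauss_vectors n d)"
proof -
  have avg_meas: "(\<lambda>\<omega>. avg_abs_proj n d (\<lambda>i j. \<omega> (i, j)) q) \<in> borel_measurable (gauss_vectors n d)" for q
    unfolding avg_abs_proj_def inner_d_def by measurable
  have nonempty: "(\<lambda>_. 0) \<in> rat_vectors d" by (simp add: rat_vectors_def)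
  then have "{\<omega> \<in> space (gauss_vectors n d). \<forall>x\<in>sphere_d d. c \<le> avg_abs_proj n d (\<lambda>i j. \<omega> (i, j)) x}
      = (\<Inter>q\<in>rat_vectors d.
           {\<omega> \<in> space (gauss_vectors n d). c * L2_set q {..<d} \<le> avg_abs_proj n d (\<lambda>i j. \<omega> (i, j)) q})"
    using sphere_lower_bound_iff_rat_vectors[OF assms] by blast
  also have "\<dots> \<in> sets (gauss_vectors n d)"
    using avg_meas nonempty by (intro sets.countable_INT' countable_rat_vectors) auto
  finally show ?thesis .
qed

definition grid :: "real \<Rightarrow> nat \<Rightarrow> nat \<Rightarrow> (nat \<Rightarrow> real) set" where
  "grid \<delta> K d = PiE {..<d} (\<lambda>_. (\<lambda>k. \<delta> * of_int k) ` {- int K..int K})"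

lemma finite_grid: "finite (grid \<delta> K d)"
  unfolding grid_def by (intro finite_PiE) auto

lemma card_grid_le: "card (grid \<delta> K d) \<le> (2 * K + 1) ^ d"
proof -
  have "card (grid \<delta> K d) = (\<Prod>j<d. card ((\<lambda>k. \<delta> * of_int k) ` {- int K..int K}))"
    unfolding grid_def by (rule card_PiE) simp
  also have "\<dots> \<le> (2 * K + 1) ^ d"
    using card_image_le[of "{- int K..int K}" "\<lambda>k. \<delta> * of_int k"] by (simp add: power_mono)
  finally show ?thesis .
qed

lemma grid_approx:
  assumes \<delta>: "\<delta> > 0" and K: "1 / \<delta> \<le> K" and x: "\<forall>j<d. \<bar>x j\<bar> \<le> 1"
  obtains y where "y \<in> grid \<delta> K d" "\<forall>j<d. \<bar>x j - y j\<bar> \<le> \<delta> / 2"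
proof
  define k where "k j = round (x j / \<delta>)" for j
  show "\<forall>j<d. \<bar>x j - restrict (\<lambda>j. \<delta> * of_int (k j)) {..<d} j\<bar> \<le> \<delta> / 2"
  proof (intro allI impI)
    fix j assume "j < d"
    have "x j - \<delta> * of_int (k j) = - (\<delta> * (of_int (round (x j / \<delta>)) - x j / \<delta>))"
      using \<delta> by (simp add: k_def algebra_simps)
    then have "\<bar>x j - \<delta> * of_int (k j)\<bar> = \<delta> * \<bar>of_int (round (x j / \<delta>)) - x j / \<delta>\<bar>"
      using \<delta> by (simp add: abs_mult)
    also have "\<dots> \<le> \<delta> * (1 / 2)"
      using \<delta> by (intro mult_left_mono of_int_round_abs_le) auto
    finally show "\<bar>x j - restrict (\<lambda>j. \<delta> * of_int (k j)) {..<d} j\<bar> \<le> \<delta> / 2"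
      using \<open>j < d\<close> by simp
  qed
  have "k j \<in> {- int K..int K}" if "j < d" for j
  proof -
    have "\<bar>x j / \<delta>\<bar> \<le> 1 / \<delta>"
      using x that \<delta> by (simp add: divide_right_mono)
    with K have bound: "\<bar>x j / \<delta>\<bar> \<le> K" by linarith
    have "- real K \<le> x j / \<delta>" "x j / \<delta> \<le> real K"
      using abs_le_D1[OF bound] abs_le_D2[OF bound] by linarith+
    then have "round (- real K) \<le> k j" "k j \<le> round (real K)"
      unfolding k_def by (simp_all only: round_mono)
    then show ?thesis by (simp add: round_of_int[of "- int K", simplified])
  qed
  then show "restrict (\<lambda>j. \<delta> * of_int (k j)) {..<d} \<in> grid \<delta> K d"
    unfolding grid_def by auto
qed

lemma sphere_lower_bound_from_grid:
  assumes n: "n > 0" and \<delta>: "\<delta> > 0" and K: "1 / \<delta> \<le> K" and s: "s \<ge> 0"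
    and a0: "a0 \<ge> 0" and a1: "a1 \<le> 1" and mesh: "2 * real d * \<delta> \<le> a1 - a0"
    and entries: "(\<Sum>i<n. \<Sum>j<d. \<bar>v i j\<bar>) \<le> 3 * real n * real d * s"
    and grid: "\<forall>y\<in>grid \<delta> K d. L2_set y {..<d} > 0 \<longrightarrow> a1 * s * L2_set y {..<d} \<le> avg_abs_proj n d v y"
    and x: "x \<in> sphere_d d"
  shows "a0 * s \<le> avg_abs_proj n d v x"
proof -
  obtain y where y: "y \<in> grid \<delta> K d" and close: "\<forall>j<d. \<bar>x j - y j\<bar> \<le> \<delta> / 2"
    using grid_approx[OF \<delta> K] sphere_d_coord_abs_le[OF x] by blast
  define e where "e = d * (\<delta> / 2)"
  have e: "0 \<le> e" "4 * e \<le> a1 - a0" using \<delta> mesh by (simp_all add: e_def mult_ac)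
  have L: "1 - e \<le> L2_set y {..<d}"
    using L2_set_ge_near_sphere_d[OF x close] by (simp add: e_def)
  then have "a1 * s * L2_set y {..<d} \<le> avg_abs_proj n d v y"
    using grid y e a0 a1 by auto
  moreover have "a1 * s * (1 - e) \<le> a1 * s * L2_set y {..<d}"
    using L e a0 s by (intro mult_left_mono) auto
  moreover have "\<delta> / 2 * (\<Sum>i<n. \<Sum>j<d. \<bar>v i j\<bar>) / n \<le> 3 * e * s"
    using entries \<delta> n by (simp add: e_def field_simps)
  ultimately have "a1 * s * (1 - e) - 3 * e * s \<le> avg_abs_proj n d v x"
    using avg_abs_proj_perturb[OF close, of n v] by linarith
  moreover have "a0 * s \<le> a1 * s * (1 - e) - 3 * e * s"
  proof -
    have "a0 * s \<le> (a1 - 4 * e) * s" using e s by (intro mult_right_mono) auto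
    also have "\<dots> \<le> a1 * s * (1 - e) - 3 * e * s"
      using e a0 a1 s mult_left_le_one_le[of "e * s" a1] by (simp add: algebra_simps)
    finally show ?thesis .
  qed
  ultimately show ?thesis by linarith
qed

section \<open>Uniform lower bound for the Gaussian design\<close>

lemma (in prob_space) prob_ge_by_union_bound:
  assumes "finite G" "A \<in> events" "\<And>y. y \<in> G \<Longrightarrow> B y \<in> events" "T \<in> events"
    and "space M - (A \<union> (\<Union>y\<in>G. B y)) \<subseteq> T"
  shows "1 - prob A - (\<Sum>y\<in>G. prob (B y)) \<le> prob T"
proof -
  have "A \<union> (\<Union>y\<in>G. B y) \<in> events" using assms(1-3) by auto
  then have "1 - prob (A \<union> (\<Union>y\<in>G. B y)) \<le> prob T"
    using assms(4,5) by (subst prob_compl[symmetric]) (auto intro: finite_measure_mono)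
  moreover have "prob (A \<union> (\<Union>y\<in>G. B y)) \<le> prob A + (\<Sum>y\<in>G. prob (B y))"
    using assms(1-3)
    by (intro order_trans[OF measure_Un_le] add_left_mono finite_measure_subadditive_finite) auto
  ultimately show ?thesis by linarith
qed

lemma card_grid_mesh_le:
  assumes d: "d > 0" and \<eta>: "\<eta> > 0"
  shows "real (card (grid (\<eta> / (2 * d)) (nat \<lceil>2 * real d / \<eta>\<rceil>) d)) \<le> (4 * real d / \<eta> + 3) ^ d"
proof -
  have "real (2 * nat \<lceil>2 * real d / \<eta>\<rceil> + 1) \<le> 4 * real d / \<eta> + 3"
    using \<eta> ceiling_correct[of "2 * real d / \<eta>"] by (simp add: of_nat_nat)
  then have "real ((2 * nat \<lceil>2 * real d / \<eta>\<rceil> + 1) ^ d) \<le> (4 * real d / \<eta> + 3) ^ d"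
    by (simp only: of_nat_power) (intro power_mono; simp)
  with of_nat_mono[OF card_grid_le] show ?thesis
    by (rule order_trans)
qed

lemma gauss_vectors_sphere_lower_bound_prob:
  assumes n: "n > 0" and d: "d > 0" and a0: "0 \<le> a0" "a0 < sqrt (2 / pi)"
  defines "\<eta> \<equiv> (sqrt (2 / pi) - a0) / 2"
  shows "1 - exp (- (real n * real d)) - (4 * real d / \<eta> + 3) ^ d * exp (- real n * \<eta>\<^sup>2 / 2)
    \<le> measure (gauss_vectors n d)
        {\<omega> \<in> space (gauss_vectors n d). \<forall>x\<in>sphere_d d. a0 / sqrt d \<le> avg_abs_proj n d (\<lambda>i j. \<omega> (i, j)) x}"
    (is "_ \<le> measure ?M ?good")
proof -
  interpret prob_space ?M by (rule prob_space_gauss_vectors)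
  define a1 where "a1 = a0 + \<eta>"
  define \<delta> where "\<delta> = \<eta> / (2 * d)"
  define K where "K = nat \<lceil>2 * real d / \<eta>\<rceil>"
  define big where "big = {\<omega> \<in> space ?M. 3 * real n * sqrt d \<le> (\<Sum>i<n. \<Sum>j<d. \<bar>\<omega> (i, j)\<bar>)}"
  define low where "low y = {\<omega> \<in> space ?M.
      avg_abs_proj n d (\<lambda>i j. \<omega> (i, j)) y \<le> a1 * L2_set y {..<d} / sqrt d}" for y
  define G where "G = {y \<in> grid \<delta> K d. L2_set y {..<d} > 0}"
  have \<eta>: "\<eta> > 0" and a1: "a1 < sqrt (2 / pi)" "sqrt (2 / pi) - a1 = \<eta>"
    using a0 by (simp_all add: \<eta>_def a1_def field_simps)
  have "sqrt (2 / pi) < 1" using pi_gt3 by simp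
  then have a1_le: "a1 \<le> 1" using a1 by linarith
  have \<delta>: "\<delta> > 0" "2 * real d * \<delta> = a1 - a0" using \<eta> d by (simp_all add: \<delta>_def a1_def)
  have K: "1 / \<delta> \<le> K" using real_nat_ceiling_ge[of "2 * real d / \<eta>"] by (simp add: \<delta>_def K_def)
  have G: "finite G" "card G \<le> card (grid \<delta> K d)"
    using finite_grid by (auto simp: G_def intro: card_mono)
  have events: "big \<in> events" "low y \<in> events" for y
    unfolding big_def low_def avg_abs_proj_def inner_d_def by measurable
  have "space ?M - (big \<union> (\<Union>y\<in>G. low y)) \<subseteq> ?good"
  proof safe
    fix \<omega> x assume \<omega>: "\<omega> \<in> space ?M" "\<omega> \<notin> big" "\<omega> \<notin> (\<Union>y\<in>G. low y)" and x: "x \<in> sphere_d d"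
    have scale: "3 * real n * real d * (1 / sqrt d) = 3 * real n * sqrt d"
      using d by (simp add: field_simps)
    have "a0 * (1 / sqrt d) \<le> avg_abs_proj n d (\<lambda>i j. \<omega> (i, j)) x"
    proof (rule sphere_lower_bound_from_grid[OF n \<delta>(1) K _ a0(1) a1_le _ _ _ x])
      show "(\<Sum>i<n. \<Sum>j<d. \<bar>\<omega> (i, j)\<bar>) \<le> 3 * real n * real d * (1 / sqrt d)"
        unfolding scale using \<omega> by (simp add: big_def)
      show "\<forall>y\<in>grid \<delta> K d. 0 < L2_set y {..<d} \<longrightarrow>
          a1 * (1 / sqrt d) * L2_set y {..<d} \<le> avg_abs_proj n d (\<lambda>i j. \<omega> (i, j)) y"
        using \<omega> by (auto simp: G_def low_def)
    qed (use \<delta> in auto)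
    then show "a0 / sqrt d \<le> avg_abs_proj n d (\<lambda>i j. \<omega> (i, j)) x" by simp
  qed
  then have "1 - prob big - (\<Sum>y\<in>G. prob (low y)) \<le> prob ?good"
    using events G a0 by (intro prob_ge_by_union_bound sets_gauss_vectors_sphere_lower_bound) auto
  moreover have "prob big \<le> exp (- (real n * real d))"
    unfolding big_def using d by (rule gauss_vectors_entry_abs_sum_upper_tail)
  moreover have "(\<Sum>y\<in>G. prob (low y)) \<le> (4 * real d / \<eta> + 3) ^ d * exp (- real n * \<eta>\<^sup>2 / 2)"
  proof -
    have "(\<Sum>y\<in>G. prob (low y)) \<le> (\<Sum>y\<in>G. exp (- real n * \<eta>\<^sup>2 / 2))"
      using gauss_vectors_avg_abs_proj_lower_tail[OF n _ a1(1)] a1(2)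
      by (intro sum_mono) (auto simp: G_def low_def)
    also have "\<dots> \<le> (4 * real d / \<eta> + 3) ^ d * exp (- real n * \<eta>\<^sup>2 / 2)"
      using G card_grid_mesh_le[OF d \<eta>]
      by (simp add: \<delta>_def K_def)
    finally show ?thesis .
  qed
  ultimately show ?thesis by linarith
qed

lemma ln_squared_le: "x \<ge> 1 \<Longrightarrow> (ln x)\<^sup>2 \<le> 16 * sqrt x"
proof -
  assume x: "x \<ge> 1"
  have "ln x = 4 * ln (sqrt (sqrt x))" using x by (simp add: ln_sqrt)
  also have "\<dots> \<le> 4 * sqrt (sqrt x)" using x ln_le_minus_one[of "sqrt (sqrt x)"] by simp
  finally have "(ln x)\<^sup>2 \<le> (4 * sqrt (sqrt x))\<^sup>2" using x by (intro power_mono) auto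
  then show ?thesis using x by (simp add: power_mult_distrib)
qed

lemma net_failure_bound:
  fixes c \<kappa> \<eta> :: real and d n :: nat
  assumes c: "c > 0" and \<kappa>: "\<kappa> > 0" and \<eta>: "\<eta> > 0"
    and d3: "3 \<le> d" and d\<eta>: "4 / \<eta> + 3 \<le> d" and dc: "(48 / (c * \<kappa>))\<^sup>2 \<le> d"
    and n: "c * (real d)\<^sup>2 / ln d \<le> n"
  shows "exp (- (real n * real d)) + (4 * real d / \<eta> + 3) ^ d * exp (- real n * \<kappa>) \<le> exp (- real d / 2)"
proof -
  have "exp 1 \<le> real d" using exp_le d3 by linarith
  then have ln1: "1 \<le> ln d" using d3 ln_exp[of 1] ln_le_cancel_iff[of "exp 1" d] by auto
  have "48 / (c * \<kappa>) \<le> sqrt d"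
    using real_sqrt_le_mono[OF dc] c \<kappa> by simp
  then have "48 \<le> c * \<kappa> * sqrt d"
    using c \<kappa> by (simp add: pos_divide_le_eq mult_ac)
  from mult_right_mono[OF this, of "sqrt d"] have "48 * sqrt d \<le> c * \<kappa> * d"
    by (simp add: mult.assoc)
  then have "3 * (ln d)\<^sup>2 \<le> c * \<kappa> * d"
    using ln_squared_le[of d] d3 by simp
  from mult_left_mono[OF this, of "real d"]
  have "3 * d * ln d \<le> c * (real d)\<^sup>2 / ln d * \<kappa>"
    using ln1 by (simp add: field_simps power2_eq_square)
  also have "\<dots> \<le> n * \<kappa>" using n \<kappa> by (intro mult_right_mono) auto
  finally have n\<kappa>: "3 * d * ln d \<le> n * \<kappa>" .
  have "0 < c * (real d)\<^sup>2 / ln d" using c d3 ln1 by simp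
  then have n1: "1 \<le> real n" using n by simp
  have base: "0 < 4 * real d / \<eta> + 3" using \<eta> by (simp add: add_nonneg_pos)
  have "4 * real d / \<eta> + 3 \<le> (real d)\<^sup>2"
    using mult_left_mono[OF d\<eta>, of d] \<eta> d3 by (simp add: power2_eq_square algebra_simps)
  then have "ln (4 * real d / \<eta> + 3) \<le> ln ((real d)\<^sup>2)"
    using base by (rule ln_mono)
  also have "\<dots> = 2 * ln d"
    using d3 by (simp add: ln_realpow)
  finally have ln_base: "ln (4 * real d / \<eta> + 3) \<le> 2 * ln d" .
  have "(4 * real d / \<eta> + 3) ^ d * exp (- real n * \<kappa>) = exp (d * ln (4 * real d / \<eta> + 3) - n * \<kappa>)"
    using base by (simp add: exp_diff exp_of_nat_mult exp_minus field_simps)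
  also have "\<dots> \<le> exp (- real d)"
    using n\<kappa> mult_left_mono[OF ln_base, of d] mult_left_mono[OF ln1, of d] by simp
  finally have grid_term: "(4 * real d / \<eta> + 3) ^ d * exp (- real n * \<kappa>) \<le> exp (- real d)" .
  have entry_term: "exp (- (real n * real d)) \<le> exp (- real d)"
    using n1 mult_right_mono[OF n1, of d] by simp
  have "2 \<le> exp (real d / 2)"
    using exp_ge_add_one_self[of "real d / 2"] d3 by linarith
  then have "2 * exp (- real d) \<le> exp (real d / 2) * exp (- real d)"
    by simp
  also have "\<dots> = exp (- real d / 2)"
    by (simp flip: exp_add)
  finally show ?thesis
    using grid_term entry_term by linarith
qed

lemma gauss_vectors_INF_avg_abs_proj_whp:
  assumes c: "c > 0" and \<epsilon>: "\<epsilon> > 0"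
  shows "\<exists>K>0. \<exists>d0::nat. \<forall>d\<ge>d0. \<forall>n::nat.
       real n \<ge> c * (real d)\<^sup>2 / ln (real d) \<longrightarrow>
       measure (gauss_vectors n d)
         {\<omega> \<in> space (gauss_vectors n d).
            (INF x\<in>sphere_d d. avg_abs_proj n d (\<lambda>i j. \<omega> (i, j)) x) \<ge> sqrt ((2 - \<epsilon>) / (pi * real d))}
       \<ge> 1 - exp (- K * real d)"
proof -
  define a0 where "a0 = sqrt ((2 - \<epsilon>) / pi)"
  define \<eta> where "\<eta> = (sqrt (2 / pi) - a0) / 2"
  have threshold: "sqrt ((2 - \<epsilon>) / (pi * real d)) = a0 / sqrt d" for d
    by (simp add: a0_def real_sqrt_divide real_sqrt_mult)
  have event: "{\<omega> \<in> space (gauss_vectors n d).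
        (INF x\<in>sphere_d d. avg_abs_proj n d (\<lambda>i j. \<omega> (i, j)) x) \<ge> sqrt ((2 - \<epsilon>) / (pi * real d))}
      = {\<omega> \<in> space (gauss_vectors n d). \<forall>x\<in>sphere_d d. a0 / sqrt d \<le> avg_abs_proj n d (\<lambda>i j. \<omega> (i, j)) x}"
    if "d > 0" for n d
    using le_INF_avg_abs_proj_iff[OF that] by (simp add: threshold)
  show ?thesis
  proof (cases "\<epsilon> < 2")
    case False
    \<comment> \<open>then the threshold is not positive (\<open>sqrt\<close> of a negative real is negative)\<close>
    then have "a0 / sqrt d \<le> avg_abs_proj n d v x" for n d v x
      using order_trans[OF _ avg_abs_proj_nonneg] by (simp add: a0_def divide_nonpos_nonneg)
    then show ?thesis
      using event prob_space.prob_space[OF prob_space_gauss_vectors]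
      by (intro exI[of _ "1::real"] conjI exI[of _ "1::nat"] allI impI) auto
  next
    case True
    then have a0: "0 < a0" "a0 < sqrt (2 / pi)" and \<eta>: "\<eta> > 0"
      using \<epsilon> by (simp_all add: a0_def \<eta>_def real_sqrt_less_mono divide_strict_right_mono)
    obtain d0 :: nat where d0: "d0 \<ge> max 3 (max (4 / \<eta> + 3) ((48 / (c * (\<eta>\<^sup>2 / 2)))\<^sup>2))"
      using real_arch_simple by blast
    show ?thesis
    proof (intro exI[of _ "1 / 2"] exI[of _ d0] allI impI conjI)
      fix d n :: nat assume d: "d0 \<le> d" and n: "c * (real d)\<^sup>2 / ln (real d) \<le> real n"
      have d3: "3 \<le> d" using d d0 by linarith
      have "0 < c * (real d)\<^sup>2 / ln (real d)" using c d3 by simp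
      then have "n > 0" using n by linarith
      then show "1 - exp (- (1 / 2) * real d) \<le> measure (gauss_vectors n d) {\<omega> \<in> space (gauss_vectors n d).
            (INF x\<in>sphere_d d. avg_abs_proj n d (\<lambda>i j. \<omega> (i, j)) x) \<ge> sqrt ((2 - \<epsilon>) / (pi * real d))}"
        using event gauss_vectors_sphere_lower_bound_prob[of n d a0] a0 d3 \<eta>
          net_failure_bound[OF c _ \<eta> d3 _ _ n, of "\<eta>\<^sup>2 / 2"] d d0
        by (simp add: \<eta>_def)
    qed simp
  qed
qed

section \<open>Deterministic designs\<close>

lemma sum_squares_cube_le:
  fixes X :: "'a \<Rightarrow> real"
  shows "(\<Sum>i\<in>A. (X i)\<^sup>2) ^ 3 \<le> (\<Sum>i\<in>A. \<bar>X i\<bar>)\<^sup>2 * (\<Sum>i\<in>A. (X i) ^ 4)"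
proof -
  define s1 s2 s3 s4 where "s1 = (\<Sum>i\<in>A. \<bar>X i\<bar>)" and "s2 = (\<Sum>i\<in>A. (X i)\<^sup>2)"
    and "s3 = (\<Sum>i\<in>A. \<bar>X i\<bar> ^ 3)" and "s4 = (\<Sum>i\<in>A. (X i) ^ 4)"
  have "s2\<^sup>2 \<le> s1 * s3"
    using Cauchy_Schwarz_ineq_sum[of "\<lambda>i. sqrt \<bar>X i\<bar>" "\<lambda>i. \<bar>X i\<bar> * sqrt \<bar>X i\<bar>" A]
    by (simp add: s1_def s2_def s3_def power_mult_distrib power2_eq_square power3_eq_cube mult_ac)
  have "s3\<^sup>2 \<le> s2 * s4"
    using Cauchy_Schwarz_ineq_sum[of X "\<lambda>i. \<bar>X i\<bar> * X i" A]
    by (simp add: s2_def s3_def s4_def power_mult_distrib power2_eq_square power3_eq_cube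
        power4_eq_xxxx mult_ac)
  have nonneg: "0 \<le> s1" "0 \<le> s2" by (simp_all add: s1_def s2_def sum_nonneg)
  show ?thesis
  proof (cases "s2 = 0")
    case False
    have "s2 * s2 ^ 3 = (s2\<^sup>2)\<^sup>2" by algebra
    also have "\<dots> \<le> (s1 * s3)\<^sup>2" using \<open>s2\<^sup>2 \<le> s1 * s3\<close> by (rule power_mono) simp
    also have "\<dots> \<le> s1\<^sup>2 * (s2 * s4)"
      using \<open>s3\<^sup>2 \<le> s2 * s4\<close> by (simp add: power_mult_distrib mult_left_mono)
    finally have "s2 * s2 ^ 3 \<le> s2 * (s1\<^sup>2 * s4)" by (simp add: mult_ac)
    then show ?thesis using False nonneg by (simp add: s1_def s2_def s4_def)
  qed (simp add: s1_def s2_def s4_def sum_nonneg)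
qed


lemma inner_d_commute: "inner_d d x y = inner_d d y x"
  unfolding inner_d_def by (simp add: mult.commute)

lemma abs_inner_d_le_norm_d: "x \<in> sphere_d d \<Longrightarrow> \<bar>inner_d d x y\<bar> \<le> norm_d d y"
  using real_sqrt_le_mono[OF Cauchy_Schwarz_ineq_sum[of x y "{..<d}"]]
  by (simp add: sphere_d_def inner_d_def norm_d_def)

lemma quadratic_form_gram_minus_identity:
  "(\<Sum>i<d. \<Sum>j<d. x i * ((1 / real n) * (\<Sum>k<n. v k i * v k j)
      - (c / d) * (if i = j then 1 else 0)) * x j)
     = (1 / real n) * (\<Sum>k<n. (inner_d d x (v k))\<^sup>2) - (c / d) * (\<Sum>i<d. (x i)\<^sup>2)"
proof -
  have gram: "(\<Sum>i<d. \<Sum>j<d. x i * (\<Sum>k<n. v k i * v k j) * x j) = (\<Sum>k<n. (inner_d d x (v k))\<^sup>2)"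
    unfolding inner_d_def power2_eq_square sum_product
    by (subst sum.swap, rule sum.cong[OF refl], subst sum.swap)
      (simp add: sum_distrib_left sum_distrib_right mult_ac)
  have identity: "(\<Sum>i<d. \<Sum>j<d. x i * (if i = j then 1 else 0) * x j) = (\<Sum>i<d. (x i)\<^sup>2)"
  proof (rule sum.cong[OF refl])
    fix i assume "i \<in> {..<d}"
    have "(\<Sum>j<d. x i * (if i = j then 1 else 0) * x j) = (\<Sum>j<d. if i = j then x i * x j else 0)"
      by (intro sum.cong) auto
    then show "(\<Sum>j<d. x i * (if i = j then 1 else 0) * x j) = (x i)\<^sup>2"
      using \<open>i \<in> {..<d}\<close> by (simp add: power2_eq_square)
  qed
  have "(\<Sum>i<d. \<Sum>j<d. x i * ((1 / real n) * (\<Sum>k<n. v k i * v k j)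
          - (c / d) * (if i = j then 1 else 0)) * x j)
      = (1 / real n) * (\<Sum>i<d. \<Sum>j<d. x i * (\<Sum>k<n. v k i * v k j) * x j)
        - (c / d) * (\<Sum>i<d. \<Sum>j<d. x i * (if i = j then 1 else 0) * x j)"
    by (simp add: right_diff_distrib left_diff_distrib sum_subtractf sum_distrib_left mult_ac)
  then show ?thesis
    by (simp only: gram identity)
qed


lemma second_moment_ge_of_loewner_ge:
  fixes n :: nat
  assumes "loewner_ge d (\<lambda>j k. (1 / real n) * (\<Sum>i<n. v i j * v i k))
      (\<lambda>j k. (c / d) * (if j = k then 1 else 0))"
    and "x \<in> sphere_d d"
  shows "c / d \<le> (1 / real n) * (\<Sum>i<n. (inner_d d x (v i))\<^sup>2)"
  using assms(1)[unfolded loewner_ge_def, rule_format, of x] assms(2)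
    quadratic_form_gram_minus_identity[where d = d and x = x and n = n and v = v and c = c]
  by (simp add: sphere_d_def)

lemma avg_abs_ge_of_moments:
  fixes X :: "nat \<Rightarrow> real"
  assumes n: "n > 0" and \<alpha>: "0 \<le> \<alpha>" "\<alpha> \<le> (1 / real n) * (\<Sum>i<n. (X i)\<^sup>2)"
    and \<beta>: "0 < \<beta>" "(1 / real n) * (\<Sum>i<n. (X i) ^ 4) \<le> \<beta>"
  shows "sqrt (\<alpha> ^ 3 / \<beta>) \<le> (1 / real n) * (\<Sum>i<n. \<bar>X i\<bar>)"
proof -
  define m1 m2 m4 where "m1 = (1 / real n) * (\<Sum>i<n. \<bar>X i\<bar>)" and "m2 = (1 / real n) * (\<Sum>i<n. (X i)\<^sup>2)"
    and "m4 = (1 / real n) * (\<Sum>i<n. (X i) ^ 4)"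
  have "(1 / real n) ^ 3 * (\<Sum>i<n. (X i)\<^sup>2) ^ 3
      \<le> (1 / real n) ^ 3 * ((\<Sum>i<n. \<bar>X i\<bar>)\<^sup>2 * (\<Sum>i<n. (X i) ^ 4))"
    by (intro mult_left_mono sum_squares_cube_le) simp
  then have "m2 ^ 3 \<le> m1\<^sup>2 * m4"
    by (simp add: m1_def m2_def m4_def power_mult_distrib power2_eq_square power3_eq_cube mult_ac)
  moreover have "\<alpha> ^ 3 \<le> m2 ^ 3" using \<alpha> by (simp add: m2_def power_mono)
  moreover have "m1\<^sup>2 * m4 \<le> m1\<^sup>2 * \<beta>" using \<beta> by (intro mult_left_mono) (simp_all add: m4_def)
  ultimately have "\<alpha> ^ 3 / \<beta> \<le> m1\<^sup>2" using \<beta> by (simp add: pos_divide_le_eq)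
  then show ?thesis
    using real_sqrt_le_mono by (fastforce simp: m1_def sum_nonneg)
qed

lemma INF_avg_abs_proj_ge:
  assumes d: "d > 0" and n: "n > 0" and c': "c' > 0" and A: "A > 0"
    and bounded: "\<forall>i<n. norm_d d (v i) \<le> B"
    and second: "loewner_ge d (\<lambda>j k. (1 / real n) * (\<Sum>i<n. v i j * v i k))
      (\<lambda>j k. (c' / real d) * (if j = k then 1 else 0))"
    and fourth: "(SUP x\<in>sphere_d d. (1 / real n) * (\<Sum>i<n. (inner_d d (v i) x) ^ 4)) \<le> A / (real d)\<^sup>2"
  shows "sqrt (c' ^ 3 / A) / sqrt d \<le> (INF x\<in>sphere_d d. avg_abs_proj n d v x)"
  unfolding le_INF_avg_abs_proj_iff[OF d]
proof
  fix x assume x: "x \<in> sphere_d d"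
  \<comment> \<open>The norm bound is needed only here: the supremum of a set that is not bounded above is junk.\<close>
  have "bdd_above ((\<lambda>x. (1 / real n) * (\<Sum>i<n. (inner_d d (v i) x) ^ 4)) ` sphere_d d)"
  proof (rule bdd_aboveI2)
    fix y assume "y \<in> sphere_d d"
    then have "\<bar>inner_d d (v i) y\<bar> \<le> B" if "i < n" for i
      using order_trans[OF abs_inner_d_le_norm_d[OF \<open>y \<in> sphere_d d\<close>] bounded[rule_format, OF that]]
      by (simp add: inner_d_commute)
    then have "(inner_d d (v i) y) ^ 4 \<le> B ^ 4" if "i < n" for i
      using power_mono[OF _ abs_ge_zero, of _ B 4] that by (simp add: power_even_abs)
    then show "(1 / real n) * (\<Sum>i<n. (inner_d d (v i) y) ^ 4) \<le> B ^ 4"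
      using sum_mono[of "{..<n}" "\<lambda>i. (inner_d d (v i) y) ^ 4" "\<lambda>_. B ^ 4"] n
      by (simp add: pos_divide_le_eq mult.commute)
  qed
  then have "(1 / real n) * (\<Sum>i<n. (inner_d d x (v i)) ^ 4) \<le> A / (real d)\<^sup>2"
    using cSUP_upper[OF x] fourth by (fastforce simp: inner_d_commute)
  then have "sqrt ((c' / real d) ^ 3 / (A / (real d)\<^sup>2)) \<le> avg_abs_proj n d v x"
    unfolding avg_abs_proj_def using n c' A d
    by (intro avg_abs_ge_of_moments second_moment_ge_of_loewner_ge[OF second x]) auto
  then show "sqrt (c' ^ 3 / A) / sqrt d \<le> avg_abs_proj n d v x"
    using d by (simp add: power2_eq_square power3_eq_cube real_sqrt_divide real_sqrt_mult mult_ac)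
qed

theorem lemma2p5:
  shows
   "(\<forall>c>0. \<forall>\<epsilon>>0. \<exists>K>0. \<exists>d0::nat. \<forall>d\<ge>d0. \<forall>n::nat.
       real n \<ge> c * (real d)\<^sup>2 / ln (real d) \<longrightarrow>
       measure (gauss_vectors n d)
         {\<omega> \<in> space (gauss_vectors n d).
            (INF x\<in>sphere_d d. avg_abs_proj n d (\<lambda>i j. \<omega> (i, j)) x)
              \<ge> sqrt ((2 - \<epsilon>) / (pi * real d))}
       \<ge> 1 - exp (- K * real d))
    \<and>
    (\<forall>B>0. \<forall>c'>0. \<forall>A>0. \<exists>C>0. \<forall>d n::nat. \<forall>v::nat \<Rightarrow> nat \<Rightarrow> real.
       d \<ge> 1 \<longrightarrow> n \<ge> 1 \<longrightarrow>
       (\<forall>i<n. (\<exists>j<d. v i j \<noteq> 0) \<and> norm_d d (v i) \<le> B) \<longrightarrow>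
       loewner_ge d (\<lambda>j k. (1 / real n) * (\<Sum>i<n. v i j * v i k))
                    (\<lambda>j k. (c' / real d) * (if j = k then 1 else 0)) \<longrightarrow>
       (SUP x\<in>sphere_d d. (1 / real n) * (\<Sum>i<n. (inner_d d (v i) x) ^ 4)) \<le> A / (real d)\<^sup>2
       \<longrightarrow>
       (INF x\<in>sphere_d d. avg_abs_proj n d v x) \<ge> C / sqrt (real d))"
  apply (intro conjI allI impI)
  subgoal for c \<epsilon> by (rule gauss_vectors_INF_avg_abs_proj_whp)
  subgoal for B c' A
    by (intro exI[of _ "sqrt (c' ^ 3 / A)"] conjI allI impI INF_avg_abs_proj_ge[where B = B]) auto
  done

end
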